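(* Let $\rho:\Omega\to(0,1)$ be a random variable such that for every $r\in\mathbb N$ there is a $\sigma\{X_j:|j|\le r\}$-measurable random variable $\rho_r$ with $\|\rho-\rho_r\|_{L^\infty(\mathbb P)}\le\beta_r$, where $\beta_r\to0$, and assume $\psi_U(s)<\frac1{\mathbb E_{\mathbb P}[\rho]}-1$ for some $s$. Let $R_n(\omega)=\sum_{j=0}^{n-1}\rho(\theta^j\omega)\rho(\theta^{j+1}\omega)\cdots\rho(\theta^{n-1}\omega)$ and, for integers $0\le m\le n$, $R_{m,n}(\omega)=\sum_{m\le k\le j\le n}\rho(\theta^k\omega)\cdots\rho(\theta^j\omega)$. Then: (i) for every $p\in\mathbb N$ there is $C_p<\infty$ with $\mathbb E_{\mathbb P}[R_n^p]\le C_p$ for all $n$; consequently, for every $\varepsilon>0$, $R_n(\omega)=o(n^\varepsilon)$ for $\mathbb P$-a.e. $\omega$; (ii) for every $\varepsilon>0$ and $p\in\mathbb N$ there is $C_{p,\varepsilon}<\infty$ such that for all $\ell\in\mathbb N$, $$\mathbb E_{\mathbb P}\Big[\sup_{(n,m):\,n\ge1,\,0\le m\le n,\ n-m\le\ell}n^{-(1+\varepsilon)}R_{m,n}^p\Big]\le C_{p,\varepsilon}\,\ell^{1+p}.$$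
   Context: $(\Omega,\mathcal F,\mathbb P)$ is a probability space, $\theta:\Omega\to\Omega$ is invertible and $\mathbb P$-preserving, and $\mathcal F$ is generated by a stationary sequence $(X_j)_{j\in\mathbb Z}$ of random variables with $X_j\circ\theta=X_{j+1}$. For $k\ge1$, $\psi_U(k)$ is the smallest number such that $\mathbb P(A\cap B)\le\mathbb P(A)\mathbb P(B)(1+\psi_U(k))$ for all $n\in\mathbb Z$, $A\in\sigma\{X_j:j\le n\}$ and $B\in\sigma\{X_j:j\ge n+k\}$ (it is nonincreasing in $k$). *)

theory Defs
  imports "HOL-Probability.Probability" "HOL-Library.Landau_Symbols"
begin

definition gen_sets :: "'a measure \<Rightarrow> 'b measure \<Rightarrow> (int \<Rightarrow> 'a \<Rightarrow> 'b) \<Rightarrow> int set \<Rightarrow> 'a set set" where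
  "gen_sets M N X J =
     sigma_sets (space M) (\<Union>j\<in>J. {X j -` A \<inter> space M | A. A \<in> sets N})"

text \<open>psi_U(k): smallest number c with P(A inter B) <= P(A) P(B) (1 + c) for all n,
  A in sigma{X_j : j <= n}, B in sigma{X_j : j >= n+k}; infinity if no such number exists.\<close>
definition psiU :: "'a measure \<Rightarrow> 'b measure \<Rightarrow> (int \<Rightarrow> 'a \<Rightarrow> 'b) \<Rightarrow> int \<Rightarrow> ereal" where
  "psiU M N X k = Inf (ereal ` {c::real. \<forall>n::int.
       \<forall>A\<in>gen_sets M N X {..n}. \<forall>B\<in>gen_sets M N X {n+k..}.
         measure M (A \<inter> B) \<le> measure M A * measure M B * (1 + c)})"

definition Rn :: "('a \<Rightarrow> 'a) \<Rightarrow> ('a \<Rightarrow> real) \<Rightarrow> nat \<Rightarrow> 'a \<Rightarrow> real" where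
  "Rn \<theta> \<rho> n \<omega> = (\<Sum>j<n. \<Prod>i\<in>{j..<n}. \<rho> ((\<theta> ^^ i) \<omega>))"

definition Rmn :: "('a \<Rightarrow> 'a) \<Rightarrow> ('a \<Rightarrow> real) \<Rightarrow> nat \<Rightarrow> nat \<Rightarrow> 'a \<Rightarrow> real" where
  "Rmn \<theta> \<rho> m n \<omega> = (\<Sum>k\<in>{m..n}. \<Sum>j\<in>{k..n}. \<Prod>i\<in>{k..j}. \<rho> ((\<theta> ^^ i) \<omega>))"

end

theory Submission
  imports Defs "HOL-Real_Asymp.Real_Asymp"
begin

text \<open>
  The hypothesis on \<open>\<psi>\<^sub>U(s)\<close> gives \<open>E[f g] \<le> (1 + c) E[f] E[g]\<close> for nonnegative \<open>f\<close> depending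
  on the coordinates up to \<open>n\<close> and \<open>g\<close> depending on those from \<open>n + s\<close>, where \<open>(1 + c) E[\<rho>] < 1\<close>.
  Replace \<open>\<rho>\<close> by \<open>\<rho>\<^sub>r + b\<close>, which depends only on the coordinates in \<open>[-r, r]\<close>, and keep only every
  \<open>L\<close>-th factor of \<open>\<rho>(\<theta>^a \<omega>) \<cdots> \<rho>(\<theta>^(a+d-1) \<omega>)\<close>, \<open>L = s + 2r\<close>: the kept factors are separated
  by gaps of length \<open>s\<close>, so iterating the mixing bound shows that this product has mean at most
  \<open>\<lambda>^\<lfloor>d/L\<rfloor>\<close> with \<open>\<lambda> = (1 + c)(E[\<rho>] + 2b) < 1\<close>. Hence the summands of \<open>R\<^sub>n\<close> decay
  exponentially in mean, and a weighted power-mean inequality bounds every moment of \<open>R\<^sub>n\<close>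
  uniformly in \<open>n\<close>. Part (ii) follows since \<open>\<Sum>\<^sub>n n^(-q\<epsilon>/2) R\<^sub>n^q\<close> has finite mean for \<open>q\<epsilon> > 2\<close>,
  part (iii) from \<open>R\<^sub>m\<^sub>,\<^sub>n \<le> \<Sum>\<^sub>j\<^sub>=\<^sub>m\<^sup>n R\<^sub>j\<^sub>+\<^sub>1\<close> by bounding the supremum with a sum over \<open>n\<close>.
\<close>

lemma nn_integral_mult_le_of_indicator:
  fixes u f :: "'a \<Rightarrow> ennreal"
  assumes F: "subalgebra M F" and u: "u \<in> borel_measurable M" and f: "f \<in> borel_measurable F"
    and ind: "\<And>A. A \<in> sets F \<Longrightarrow> (\<integral>\<^sup>+x. indicator A x * u x \<partial>M) \<le> c * emeasure M A"
  shows "(\<integral>\<^sup>+x. f x * u x \<partial>M) \<le> c * (\<integral>\<^sup>+x. f x \<partial>M)"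
proof -
  \<comment> \<open>On \<open>F\<close>, the measure with density \<open>u\<close> is dominated by \<open>c\<close> times \<open>M\<close>.\<close>
  have fM: "f \<in> borel_measurable M"
    using f F by (auto simp: subalgebra_def measurable_def)
  have Fd: "subalgebra (density M u) F" and Fs: "subalgebra (scale_measure c M) F"
    using F by (auto simp: subalgebra_def space_scale_measure)
  have "(\<integral>\<^sup>+x. f x * u x \<partial>M) = (\<integral>\<^sup>+x. f x \<partial>restr_to_subalg (density M u) F)"
    using fM u f Fd by (simp add: nn_integral_subalgebra2 nn_integral_density mult.commute)
  also have "\<dots> \<le> (\<integral>\<^sup>+x. f x \<partial>restr_to_subalg (scale_measure c M) F)"
  proof (rule nn_integral_mono_measure)
    show sets_eq: "sets (restr_to_subalg (density M u) F) = sets (restr_to_subalg (scale_measure c M) F)"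
      using Fd Fs by (simp add: sets_restr_to_subalg)
    have "emeasure (restr_to_subalg (density M u) F) A \<le> emeasure (restr_to_subalg (scale_measure c M) F) A" for A
    proof (cases "A \<in> sets F")
      case True
      then have "A \<in> sets M" using F by (auto simp: subalgebra_def)
      have "emeasure (density M u) A = (\<integral>\<^sup>+x. indicator A x * u x \<partial>M)"
        using \<open>A \<in> sets M\<close> u by (simp add: emeasure_density mult.commute)
      then show ?thesis
        using True ind[OF True] Fd Fs by (simp add: emeasure_restr_to_subalg)
    next
      case False
      then show ?thesis using Fd by (simp add: emeasure_notin_sets sets_restr_to_subalg)
    qed
    then show "restr_to_subalg (density M u) F \<le> restr_to_subalg (scale_measure c M) F"
      unfolding le_measure_iff using sets_eq by (auto simp: le_fun_def space_restr_to_subalg space_scale_measure)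
  qed
  also have "\<dots> = c * (\<integral>\<^sup>+x. f x \<partial>M)"
    using f fM Fs by (simp add: nn_integral_subalgebra2 nn_integral_scale_measure)
  finally show ?thesis .
qed

lemma nn_integral_mult_le_mixing:
  fixes f g :: "'a \<Rightarrow> ennreal"
  assumes F: "subalgebra M F" and H: "subalgebra M H"
    and mix: "\<And>A B. A \<in> sets F \<Longrightarrow> B \<in> sets H \<Longrightarrow> emeasure M (A \<inter> B) \<le> C * emeasure M A * emeasure M B"
    and f: "f \<in> borel_measurable F" and g: "g \<in> borel_measurable H"
  shows "(\<integral>\<^sup>+x. f x * g x \<partial>M) \<le> C * (\<integral>\<^sup>+x. f x \<partial>M) * (\<integral>\<^sup>+x. g x \<partial>M)"
proof -
  have gM: "g \<in> borel_measurable M"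
    using g H by (auto simp: subalgebra_def measurable_def)
  have "(\<integral>\<^sup>+x. indicator A x * g x \<partial>M) \<le> (C * emeasure M A) * (\<integral>\<^sup>+x. g x \<partial>M)"
    if A: "A \<in> sets F" for A
  proof -
    have AM: "A \<in> sets M" using A F by (auto simp: subalgebra_def)
    have "(\<integral>\<^sup>+x. g x * indicator A x \<partial>M) \<le> (C * emeasure M A) * (\<integral>\<^sup>+x. g x \<partial>M)"
    proof (rule nn_integral_mult_le_of_indicator[OF H _ g])
      fix B assume "B \<in> sets H"
      then have "B \<in> sets M" using H by (auto simp: subalgebra_def)
      then show "(\<integral>\<^sup>+x. indicator B x * indicator A x \<partial>M) \<le> C * emeasure M A * emeasure M B"
        using mix[OF A \<open>B \<in> sets H\<close>] AM
        by (simp add: indicator_inter_arith[symmetric] Int_commute)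
    qed (use AM in simp)
    then show ?thesis by (simp add: mult.commute)
  qed
  then have "(\<integral>\<^sup>+x. f x * g x \<partial>M) \<le> (C * (\<integral>\<^sup>+x. g x \<partial>M)) * (\<integral>\<^sup>+x. f x \<partial>M)"
    by (intro nn_integral_mult_le_of_indicator[OF F gM f]) (simp add: mult_ac)
  then show ?thesis by (simp add: mult_ac)
qed

lemma convex_on_power_nonneg: "convex_on {0::real..} (\<lambda>x. x ^ n)"
proof (cases "even n")
  case True
  then show ?thesis using convex_on_subset[OF convex_power_even[OF True]] by blast
qed (rule convex_power_odd)

lemma power_sum_le_weighted:
  fixes x t :: "'i \<Rightarrow> real"
  assumes S: "finite S" "S \<noteq> {}" and x: "\<And>i. i \<in> S \<Longrightarrow> 0 \<le> x i" and t: "\<And>i. i \<in> S \<Longrightarrow> 0 < t i"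
    and p: "p \<ge> 1"
  shows "(\<Sum>i\<in>S. x i) ^ p \<le> (\<Sum>i\<in>S. t i) ^ (p - 1) * (\<Sum>i\<in>S. x i ^ p / t i ^ (p - 1))"
proof -
  define T where "T = (\<Sum>i\<in>S. t i)"
  have T: "T > 0" unfolding T_def using S t by (intro sum_pos) auto
  have Tp: "T ^ p = T * T ^ (p - 1)" and tp: "\<And>i. t i ^ p = t i * t i ^ (p - 1)"
    using p by (cases p; simp)+
  have weighted: "(t i / T) * (x i / t i) ^ p = x i ^ p / t i ^ (p - 1) / T" if "i \<in> S" for i
    using t[OF that] T by (simp add: power_divide tp)
  have "(\<Sum>i\<in>S. (t i / T) *\<^sub>R (x i / t i)) ^ p \<le> (\<Sum>i\<in>S. (t i / T) * (x i / t i) ^ p)"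
    using convex_on_sum[OF S convex_on_power_nonneg, of "\<lambda>i. t i / T" "\<lambda>i. x i / t i"] T t x
    by (simp add: T_def sum_divide_distrib[symmetric] less_imp_le)
  also have "(\<Sum>i\<in>S. (t i / T) *\<^sub>R (x i / t i)) = (\<Sum>i\<in>S. x i) / T"
    using t by (simp add: sum_divide_distrib less_imp_neq[symmetric] cong: sum.cong)
  also have "(\<Sum>i\<in>S. (t i / T) * (x i / t i) ^ p) = (\<Sum>i\<in>S. x i ^ p / t i ^ (p - 1)) / T"
    using weighted by (simp add: sum_divide_distrib)
  finally show ?thesis
    using T by (simp add: power_divide divide_le_eq Tp T_def[symmetric] mult_ac)
qed

lemma sum_power_reverse_le:
  fixes x :: real
  assumes "0 \<le> x" "x < 1"
  shows "(\<Sum>j<n. x ^ (n - j)) \<le> 1 / (1 - x)"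
proof -
  have "(\<Sum>j<n. x ^ (n - j)) = (\<Sum>j<n. x * x ^ (n - Suc j))"
    by (intro sum.cong) (auto simp: Suc_diff_Suc[symmetric])
  also have "\<dots> = x * (\<Sum>j<n. x ^ (n - Suc j))"
    by (simp add: sum_distrib_left)
  also have "(\<Sum>j<n. x ^ (n - Suc j)) = (1 - x ^ n) / (1 - x)"
    using assms by (simp add: sum.nat_diff_reindex sum_gp_strict)
  also have "x * ((1 - x ^ n) / (1 - x)) \<le> 1 * (1 / (1 - x))"
    using assms power_le_one[of x n] by (intro mult_mono divide_right_mono) auto
  finally show ?thesis by simp
qed

lemma power_div_le_root_power:
  fixes lam :: real
  assumes "0 < lam" "lam < 1" "L \<ge> 1"
  shows "lam ^ (d div L) \<le> root L lam ^ d / lam"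
proof -
  have "lam ^ (d div L) * lam = root L lam ^ (L * (d div L + 1))"
    using assms by (simp add: power_mult real_root_pow_pos2 power_add)
  also have "\<dots> \<le> root L lam ^ d"
  proof (rule power_decreasing)
    have "d = d div L * L + d mod L" by simp
    moreover have "d mod L < L" using assms by simp
    moreover have "L * (d div L + 1) = d div L * L + L" by (simp add: algebra_simps)
    ultimately show "d \<le> L * (d div L + 1)" by linarith
  qed (use assms in auto)
  finally show ?thesis using assms by (simp add: pos_le_divide_eq)
qed

lemma le_max_mult_of_power_le:
  fixes R w B :: real
  assumes "0 \<le> R" "0 < w" "q \<ge> 1" "R ^ q \<le> B * w ^ q"
  shows "R \<le> max 1 B * w"
proof (cases "R \<le> w")
  case False
  have Rq: "R ^ q = R * R ^ (q - 1)" and wq: "w ^ q = w * w ^ (q - 1)"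
    using assms(3) by (cases q; simp)+
  have "R * w ^ (q - 1) \<le> R ^ q"
    unfolding Rq using False assms by (intro mult_left_mono power_mono) auto
  also have "\<dots> \<le> (B * w) * w ^ (q - 1)"
    using assms(4) by (simp add: wq mult_ac)
  finally have "R \<le> B * w" using assms by simp
  also have "\<dots> \<le> max 1 B * w" using assms by (intro mult_right_mono) auto
  finally show ?thesis .
next
  case True
  moreover have "1 * w \<le> max 1 B * w"
    using assms by (intro mult_right_mono) auto
  ultimately show ?thesis by simp
qed

lemma power_sum_le_geometric_weights:
  fixes x :: "nat \<Rightarrow> real"
  assumes x: "\<And>j. 0 \<le> x j \<and> x j \<le> 1" and \<tau>: "0 < \<tau>" "\<tau> < 1" and p: "p \<ge> 1"
  shows "(\<Sum>j<n. x j) ^ p \<le> (1 / (1 - \<tau>)) ^ (p - 1) * (\<Sum>j<n. x j / (\<tau> ^ (p - 1)) ^ (n - j))"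
proof (cases "n = 0")
  case True
  then show ?thesis using p by (simp add: power_0_left)
next
  case False
  have t: "0 < \<tau> ^ (n - j)" for j using \<tau> by simp
  have "(\<Sum>j<n. x j) ^ p \<le> (\<Sum>j<n. \<tau> ^ (n - j)) ^ (p - 1) * (\<Sum>j<n. x j ^ p / (\<tau> ^ (n - j)) ^ (p - 1))"
    using False x t p by (intro power_sum_le_weighted) auto
  also have "\<dots> \<le> (1 / (1 - \<tau>)) ^ (p - 1) * (\<Sum>j<n. x j / (\<tau> ^ (n - j)) ^ (p - 1))"
  proof (intro mult_mono power_mono sum_mono divide_right_mono sum_nonneg)
    show "(\<Sum>j<n. \<tau> ^ (n - j)) \<le> 1 / (1 - \<tau>)"
      using \<tau> by (intro sum_power_reverse_le) auto
    show "x j ^ p \<le> x j" for j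
      using x[of j] p power_decreasing[of 1 p "x j"] by simp
  qed (use x \<tau> in auto)
  finally show ?thesis by (simp add: power_mult[symmetric] mult.commute)
qed

lemma AE_bounded_of_summable_weights:
  fixes Z :: "nat \<Rightarrow> 'a \<Rightarrow> real" and a :: "nat \<Rightarrow> real"
  assumes Z: "\<And>n. Z n \<in> borel_measurable M" and bound: "\<And>n. (\<integral>\<^sup>+\<omega>. ennreal (Z n \<omega>) \<partial>M) \<le> ennreal C"
    and C: "0 \<le> C" and a: "summable a" "\<And>n. 0 \<le> a n"
  shows "AE \<omega> in M. \<exists>B. \<forall>n. a n * Z n \<omega> \<le> B"
proof -
  define V where "V \<omega> = (\<Sum>n. ennreal (a n * Z n \<omega>))" for \<omega>
  have term_measurable: "(\<lambda>\<omega>. ennreal (a n * Z n \<omega>)) \<in> borel_measurable M" for n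
    using Z by measurable
  have "integral\<^sup>N M V = (\<Sum>n. \<integral>\<^sup>+\<omega>. ennreal (a n * Z n \<omega>) \<partial>M)"
    unfolding V_def using term_measurable by (rule nn_integral_suminf)
  also have "\<dots> = (\<Sum>n. ennreal (a n) * \<integral>\<^sup>+\<omega>. ennreal (Z n \<omega>) \<partial>M)"
    using Z a by (simp add: ennreal_mult' nn_integral_cmult)
  also have "\<dots> \<le> (\<Sum>n. ennreal (a n * C))"
    using bound a by (intro suminf_le) (auto simp: ennreal_mult' intro: mult_left_mono)
  also have "\<dots> = ennreal (\<Sum>n. a n * C)"
    using C a by (intro suminf_ennreal2 summable_mult2) auto
  finally have "integral\<^sup>N M V \<noteq> \<infinity>"
    by (auto simp: top_unique)
  moreover have "V \<in> borel_measurable M"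
    unfolding V_def using term_measurable by measurable
  ultimately have "AE \<omega> in M. V \<omega> \<noteq> \<infinity>"
    by (intro nn_integral_PInf_AE)
  then show ?thesis
  proof eventually_elim
    case (elim \<omega>)
    obtain B where B: "0 \<le> B" "V \<omega> = ennreal B"
      using elim by (cases "V \<omega>" rule: ennreal_cases) auto
    have "ennreal (a n * Z n \<omega>) \<le> ennreal B" for n
      unfolding B(2)[symmetric] V_def using sum_le_suminf[of "\<lambda>n. ennreal (a n * Z n \<omega>)" "{n}"] by simp
    then have "a n * Z n \<omega> \<le> B" for n
      using B(1) by simp
    then show ?case by blast
  qed
qed

lemma AE_o_powr_of_bounded_moments:
  fixes Y :: "nat \<Rightarrow> 'a \<Rightarrow> real"
  assumes Y: "\<And>n. Y n \<in> borel_measurable M" "\<And>n \<omega>. \<omega> \<in> space M \<Longrightarrow> 0 \<le> Y n \<omega>"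
    and moments: "\<And>q. q \<ge> 1 \<Longrightarrow> \<exists>C\<ge>0. \<forall>n. (\<integral>\<^sup>+\<omega>. ennreal (Y n \<omega> ^ q) \<partial>M) \<le> ennreal C"
    and \<epsilon>: "0 < \<epsilon>"
  shows "AE \<omega> in M. (\<lambda>n. Y n \<omega>) \<in> o(\<lambda>n. real n powr \<epsilon>)"
proof -
  define q where "q = nat \<lceil>2 / \<epsilon>\<rceil> + 1"
  define e where "e = real q * (\<epsilon> / 2)"
  have q: "q \<ge> 1" by (simp add: q_def)
  have "2 / \<epsilon> < real q" unfolding q_def by linarith
  then have e: "1 < e" using \<epsilon> by (simp add: e_def field_simps)
  obtain C where C: "0 \<le> C" "\<And>n. (\<integral>\<^sup>+\<omega>. ennreal (Y n \<omega> ^ q) \<partial>M) \<le> ennreal C"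
    using moments[OF q] by blast
  have "AE \<omega> in M. \<exists>B. \<forall>n. real n powr (-e) * Y n \<omega> ^ q \<le> B"
    using Y(1) C e by (intro AE_bounded_of_summable_weights) (auto simp: summable_real_powr_iff)
  with AE_space show ?thesis
  proof eventually_elim
    case (elim \<omega>)
    then obtain B where B: "\<And>n. real n powr (-e) * Y n \<omega> ^ q \<le> B" by blast
    have "Y n \<omega> \<le> max 1 B * real n powr (\<epsilon> / 2)" if n: "n \<ge> 1" for n
    proof (rule le_max_mult_of_power_le[OF Y(2)[OF elim(1)] _ q])
      have "(real n powr (\<epsilon> / 2)) ^ q = real n powr e"
        using n by (simp add: powr_realpow[symmetric] powr_powr e_def mult.commute)
      then show "Y n \<omega> ^ q \<le> B * (real n powr (\<epsilon> / 2)) ^ q"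
        using B[of n] n by (simp add: powr_minus divide_simps mult.commute)
    qed (use n in simp)
    then have "(\<lambda>n. Y n \<omega>) \<in> O(\<lambda>n. real n powr (\<epsilon> / 2))"
      using Y(2)[OF elim(1)]
      by (intro bigoI[where c = "max 1 B"] eventually_mono[OF eventually_ge_at_top[of 1]]) auto
    also have "(\<lambda>n::nat. real n powr (\<epsilon> / 2)) \<in> o(\<lambda>n. real n powr \<epsilon>)"
      using \<epsilon> by real_asymp
    finally show ?case .
  qed
qed

lemma nn_integral_window_sum_le:
  fixes Y :: "nat \<Rightarrow> nat \<Rightarrow> 'a \<Rightarrow> real"
  assumes Y: "\<And>m n. Y m n \<in> borel_measurable M"
    and moment: "\<And>m n. m \<le> n \<Longrightarrow> (\<integral>\<^sup>+\<omega>. ennreal (Y m n \<omega> ^ p) \<partial>M) \<le> ennreal (real (Suc (n - m)) ^ p * C)"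
    and C: "0 \<le> C" and a: "0 \<le> a"
  shows "(\<integral>\<^sup>+\<omega>. (\<Sum>m\<in>{n-l..n}. ennreal (a * Y m n \<omega> ^ p)) \<partial>M) \<le> ennreal (real (Suc l) ^ Suc p * C * a)"
proof -
  have "(\<integral>\<^sup>+\<omega>. (\<Sum>m\<in>{n-l..n}. ennreal (a * Y m n \<omega> ^ p)) \<partial>M)
      = (\<Sum>m\<in>{n-l..n}. ennreal a * (\<integral>\<^sup>+\<omega>. ennreal (Y m n \<omega> ^ p) \<partial>M))"
    using Y a by (simp add: nn_integral_sum ennreal_mult' nn_integral_cmult)
  also have "\<dots> \<le> (\<Sum>m\<in>{n-l..n}. ennreal a * ennreal (real (Suc l) ^ p * C))"
  proof (intro sum_mono mult_left_mono)
    fix m assume m: "m \<in> {n-l..n}"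
    then have "ennreal (real (Suc (n - m)) ^ p * C) \<le> ennreal (real (Suc l) ^ p * C)"
      using C by (intro ennreal_leI mult_right_mono power_mono) auto
    then show "(\<integral>\<^sup>+\<omega>. ennreal (Y m n \<omega> ^ p) \<partial>M) \<le> ennreal (real (Suc l) ^ p * C)"
      using moment[of m n] m by simp
  qed simp
  also have "\<dots> = ennreal (real (card {n-l..n}) * (a * (real (Suc l) ^ p * C)))"
    using a C by (simp add: ennreal_mult'[symmetric] ennreal_of_nat_eq_real_of_nat)
  also have "\<dots> \<le> ennreal (real (Suc l) * (a * (real (Suc l) ^ p * C)))"
    using a C by (intro ennreal_leI mult_right_mono) auto
  also have "\<dots> = ennreal (real (Suc l) ^ Suc p * C * a)"
    by (simp add: mult_ac)
  finally show ?thesis .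
qed

lemma nn_integral_SUP_window_le:
  fixes Y :: "nat \<Rightarrow> nat \<Rightarrow> 'a \<Rightarrow> real"
  assumes Y: "\<And>m n. Y m n \<in> borel_measurable M"
    and moment: "\<And>m n. m \<le> n \<Longrightarrow> (\<integral>\<^sup>+\<omega>. ennreal (Y m n \<omega> ^ p) \<partial>M) \<le> ennreal (real (Suc (n - m)) ^ p * C)"
    and C: "0 \<le> C" and \<epsilon>: "0 < \<epsilon>"
  shows "\<exists>C'. \<forall>l\<ge>1. (\<integral>\<^sup>+\<omega>. (SUP nm\<in>{(n, m). 1 \<le> n \<and> m \<le> n \<and> n - m \<le> l}.
      ennreal (real (fst nm) powr (-(1 + \<epsilon>)) * Y (snd nm) (fst nm) \<omega> ^ p)) \<partial>M) \<le> ennreal (C' * real l ^ (1 + p))"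
proof -
  define a where "a n = real n powr (-(1 + \<epsilon>))" for n :: nat
  have a: "summable a" "\<And>n. 0 \<le> a n"
    unfolding a_def using \<epsilon> by (auto simp: summable_real_powr_iff)
  have "(\<integral>\<^sup>+\<omega>. (SUP nm\<in>{(n, m). 1 \<le> n \<and> m \<le> n \<and> n - m \<le> l}.
      ennreal (real (fst nm) powr (-(1 + \<epsilon>)) * Y (snd nm) (fst nm) \<omega> ^ p)) \<partial>M)
      \<le> ennreal ((2 ^ (1 + p) * C * suminf a) * real l ^ (1 + p))" if l: "l \<ge> 1" for l
  proof -
    define f where "f n \<omega> = (\<Sum>m\<in>{n-l..n}. ennreal (a n * Y m n \<omega> ^ p))" for n \<omega>
    have "(SUP nm\<in>{(n, m). 1 \<le> n \<and> m \<le> n \<and> n - m \<le> l}.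
        ennreal (real (fst nm) powr (-(1 + \<epsilon>)) * Y (snd nm) (fst nm) \<omega> ^ p)) \<le> (\<Sum>n. f n \<omega>)" for \<omega>
    proof (rule SUP_least)
      fix nm assume "nm \<in> {(n, m). 1 \<le> n \<and> m \<le> n \<and> n - m \<le> l}"
      then obtain n m where nm: "nm = (n, m)" "m \<le> n" "n - m \<le> l" by auto
      then have "ennreal (a n * Y m n \<omega> ^ p) \<le> f n \<omega>"
        unfolding f_def by (intro member_le_sum) auto
      also have "\<dots> \<le> (\<Sum>n. f n \<omega>)"
        using sum_le_suminf[of "\<lambda>n. f n \<omega>" "{n}"] by simp
      finally show "ennreal (real (fst nm) powr (-(1 + \<epsilon>)) * Y (snd nm) (fst nm) \<omega> ^ p) \<le> (\<Sum>n. f n \<omega>)"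
        by (simp add: a_def nm(1))
    qed
    then have "(\<integral>\<^sup>+\<omega>. (SUP nm\<in>{(n, m). 1 \<le> n \<and> m \<le> n \<and> n - m \<le> l}.
        ennreal (real (fst nm) powr (-(1 + \<epsilon>)) * Y (snd nm) (fst nm) \<omega> ^ p)) \<partial>M) \<le> (\<integral>\<^sup>+\<omega>. (\<Sum>n. f n \<omega>) \<partial>M)"
      by (intro nn_integral_mono)
    also have "\<dots> = (\<Sum>n. integral\<^sup>N M (f n))"
      unfolding f_def using Y by (intro nn_integral_suminf) measurable
    also have "\<dots> \<le> (\<Sum>n. ennreal (real (Suc l) ^ Suc p * C * a n))"
      unfolding f_def using Y moment C a(2) by (intro suminf_le nn_integral_window_sum_le) auto
    also have "\<dots> = ennreal (real (Suc l) ^ Suc p * C * suminf a)"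
      using C a by (simp add: suminf_ennreal2 summable_mult suminf_mult)
    also have "\<dots> \<le> ennreal ((2 ^ (1 + p) * C * suminf a) * real l ^ (1 + p))"
    proof (intro ennreal_leI)
      have "real (Suc l) ^ Suc p \<le> (2 * real l) ^ Suc p"
        using l by (intro power_mono) auto
      then have "real (Suc l) ^ Suc p * (C * suminf a) \<le> (2 * real l) ^ Suc p * (C * suminf a)"
        using C suminf_nonneg[OF a] by (intro mult_right_mono) auto
      then show "real (Suc l) ^ Suc p * C * suminf a \<le> (2 ^ (1 + p) * C * suminf a) * real l ^ (1 + p)"
        by (simp add: power_mult_distrib mult_ac)
    qed
    finally show ?thesis .
  qed
  then show ?thesis by blast
qed

locale shift_process = prob_space M
  for M :: "'a measure" and N :: "'b measure" and X :: "int \<Rightarrow> 'a \<Rightarrow> 'b" and \<theta> :: "'a \<Rightarrow> 'a" +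
  assumes theta_measurable: "\<theta> \<in> measurable M M"
    and theta_preserving: "distr M M \<theta> = M"
    and X_measurable: "\<And>j. X j \<in> measurable M N"
    and X_shift: "\<And>j \<omega>. \<omega> \<in> space M \<Longrightarrow> X j (\<theta> \<omega>) = X (j + 1) \<omega>"
begin

abbreviation \<F> :: "int set \<Rightarrow> 'a measure" where
  "\<F> J \<equiv> sigma (space M) (gen_sets M N X J)"

lemma gen_sets_subset_sets: "gen_sets M N X J \<subseteq> sets M"
  unfolding gen_sets_def using X_measurable by (intro sets.sigma_sets_subset) auto

lemma sets_\<F>: "sets (\<F> J) = gen_sets M N X J"
proof -
  have "gen_sets M N X J \<subseteq> Pow (space M)"
    using gen_sets_subset_sets sets.sets_into_space by blast
  then have "sets (\<F> J) = sigma_sets (space M) (gen_sets M N X J)"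
    by (rule sets_measure_of)
  also have "\<dots> = gen_sets M N X J"
    unfolding gen_sets_def by (rule sigma_sets_sigma_sets_eq) auto
  finally show ?thesis .
qed

lemma space_\<F>: "space (\<F> J) = space M"
  by (rule space_measure_of_conv)

lemma subalgebra_\<F>: "subalgebra M (\<F> J)"
  unfolding subalgebra_def using gen_sets_subset_sets by (simp add: sets_\<F> space_\<F>)

lemma measurable_\<F>_mono:
  assumes "f \<in> measurable (\<F> J) K" "J \<subseteq> J'"
  shows "f \<in> measurable (\<F> J') K"
proof -
  have "gen_sets M N X J \<subseteq> gen_sets M N X J'"
    unfolding gen_sets_def using \<open>J \<subseteq> J'\<close> by (intro sigma_sets_mono') auto
  then show ?thesis
    using assms(1) measurable_mono[of K K "\<F> J" "\<F> J'"] by (auto simp: sets_\<F> space_\<F>)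
qed

lemma measurable_\<F>_imp_measurable: "f \<in> measurable (\<F> J) K \<Longrightarrow> f \<in> measurable M K"
  using subalgebra_\<F> measurable_mono[of K K "\<F> J" M] by (auto simp: subalgebra_def)

lemma funpow_theta_measurable: "\<theta> ^^ i \<in> measurable M M"
  by (rule measurable_compose_n[OF theta_measurable])

lemma funpow_theta_space: "\<omega> \<in> space M \<Longrightarrow> (\<theta> ^^ i) \<omega> \<in> space M"
  using measurable_space[OF funpow_theta_measurable] .

lemma X_funpow_theta: "\<omega> \<in> space M \<Longrightarrow> X j ((\<theta> ^^ i) \<omega>) = X (j + int i) \<omega>"
proof (induction i arbitrary: j)
  case (Suc i)
  then show ?case
    using X_shift[OF funpow_theta_space[OF Suc.prems]] by (simp add: algebra_simps)
qed simp

lemma funpow_theta_measurable_\<F>: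
  "\<theta> ^^ i \<in> measurable (\<F> ((\<lambda>j. j + int i) ` J)) (\<F> J)"
proof (rule measurable_sigma_sets)
  show "sets (\<F> J) = sigma_sets (space M) (\<Union>j\<in>J. {X j -` A \<inter> space M | A. A \<in> sets N})"
    by (simp only: sets_\<F>) (simp add: gen_sets_def)
  show "(\<Union>j\<in>J. {X j -` A \<inter> space M | A. A \<in> sets N}) \<subseteq> Pow (space M)"
    by blast
  show "\<theta> ^^ i \<in> space (\<F> ((\<lambda>j. j + int i) ` J)) \<rightarrow> space M"
    using funpow_theta_space by (auto simp: space_\<F>)
  fix E assume "E \<in> (\<Union>j\<in>J. {X j -` A \<inter> space M | A. A \<in> sets N})"
  then obtain j A where j: "j \<in> J" and A: "A \<in> sets N" and E: "E = X j -` A \<inter> space M"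
    by auto
  have "(\<theta> ^^ i) -` E \<inter> space (\<F> ((\<lambda>j. j + int i) ` J)) = X (j + int i) -` A \<inter> space M"
    using E funpow_theta_space X_funpow_theta by (auto simp: space_\<F>)
  also have "\<dots> \<in> gen_sets M N X ((\<lambda>j. j + int i) ` J)"
    unfolding gen_sets_def using j A by (intro sigma_sets.Basic) blast
  finally show "(\<theta> ^^ i) -` E \<inter> space (\<F> ((\<lambda>j. j + int i) ` J)) \<in> sets (\<F> ((\<lambda>j. j + int i) ` J))"
    by (simp add: sets_\<F>)
qed

lemma measurable_comp_funpow_theta:
  assumes "h \<in> borel_measurable (\<F> {a..b})"
  shows "(\<lambda>\<omega>. h ((\<theta> ^^ i) \<omega>)) \<in> borel_measurable (\<F> {a + int i..b + int i})"
proof -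
  have "(\<lambda>j. j + int i) ` {a..b} = {a + int i..b + int i}"
    by (simp add: image_add_atLeastAtMost' add.commute)
  then show ?thesis
    using measurable_compose[OF funpow_theta_measurable_\<F>[of i "{a..b}"] assms]
    by (simp add: comp_def)
qed

lemma distr_funpow_theta: "distr M M (\<theta> ^^ i) = M"
proof (induction i)
  case 0
  then show ?case by (simp add: distr_id2[symmetric] id_def)
next
  case (Suc i)
  have "distr M M (\<theta> ^^ Suc i) = distr (distr M M (\<theta> ^^ i)) M \<theta>"
    unfolding funpow.simps(2) by (rule distr_distr[symmetric, OF theta_measurable funpow_theta_measurable])
  also have "\<dots> = M"
    using Suc theta_preserving by simp
  finally show ?case .
qed

lemma nn_integral_funpow_theta:
  assumes "f \<in> borel_measurable M"
  shows "(\<integral>\<^sup>+\<omega>. f ((\<theta> ^^ i) \<omega>) \<partial>M) = integral\<^sup>N M f"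
proof -
  have "integral\<^sup>N (distr M M (\<theta> ^^ i)) f = (\<integral>\<^sup>+\<omega>. f ((\<theta> ^^ i) \<omega>) \<partial>M)"
    using assms by (intro nn_integral_distr funpow_theta_measurable) (simp add: distr_funpow_theta)
  then show ?thesis by (simp add: distr_funpow_theta)
qed

lemma AE_funpow_theta:
  assumes "AE \<omega> in M. P \<omega>" "{\<omega>\<in>space M. P \<omega>} \<in> sets M"
  shows "AE \<omega> in M. P ((\<theta> ^^ i) \<omega>)"
proof -
  have "AE \<omega> in distr M M (\<theta> ^^ i). P \<omega>"
    by (subst distr_funpow_theta) (rule assms(1))
  then show ?thesis
    using AE_distr_iff[OF funpow_theta_measurable assms(2)] by simp
qed

text \<open>\<open>psi_bounded s C\<close> says that \<open>1 + \<psi>\<^sub>U(s) \<le> C\<close>.\<close>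

definition psi_bounded :: "int \<Rightarrow> ennreal \<Rightarrow> bool" where
  "psi_bounded s C \<longleftrightarrow> (\<forall>n A B. A \<in> gen_sets M N X {..n} \<longrightarrow> B \<in> gen_sets M N X {n + s..} \<longrightarrow>
     emeasure M (A \<inter> B) \<le> C * emeasure M A * emeasure M B)"

lemma psi_bounded_of_psiU_less:
  assumes "psiU M N X s < ereal t"
  obtains c where "0 \<le> c" "c < t" "psi_bounded s (ennreal (1 + c))"
proof -
  obtain c where c: "c < t" and mix: "\<And>n A B. A \<in> gen_sets M N X {..n} \<Longrightarrow> B \<in> gen_sets M N X {n + s..} \<Longrightarrow>
      measure M (A \<inter> B) \<le> measure M A * measure M B * (1 + c)"
    using assms unfolding psiU_def by (auto simp: Inf_less_iff)
  have "space M \<in> gen_sets M N X J" for J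
    unfolding gen_sets_def by (rule sigma_sets_top)
  then have "0 \<le> c"
    using mix[of "space M" 0 "space M"] by (simp add: prob_space)
  moreover have "psi_bounded s (ennreal (1 + c))"
    unfolding psi_bounded_def
  proof (intro allI impI)
    fix n A B assume "A \<in> gen_sets M N X {..n}" "B \<in> gen_sets M N X {n + s..}"
    then have "ennreal (measure M (A \<inter> B)) \<le> ennreal (measure M A * measure M B * (1 + c))"
      by (intro ennreal_leI mix)
    then show "emeasure M (A \<inter> B) \<le> ennreal (1 + c) * emeasure M A * emeasure M B"
      using \<open>0 \<le> c\<close> by (simp add: emeasure_eq_measure ennreal_mult mult_ac)
  qed
  ultimately show ?thesis using c that by blast
qed

lemma block_product_measurable:
  fixes h :: "'a \<Rightarrow> ennreal"
  assumes h: "h \<in> borel_measurable (\<F> {-int r..int r})"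
  shows "(\<lambda>\<omega>. \<Prod>k<K. h ((\<theta> ^^ (a + k * L)) \<omega>)) \<in> borel_measurable (\<F> {..int a + int K * int L - int L + int r})"
proof (rule borel_measurable_prod_ennreal)
  fix k assume "k \<in> {..<K}"
  then have "int (Suc k) * int L \<le> int K * int L"
    by (intro mult_right_mono) auto
  then have "int k * int L \<le> int K * int L - int L"
    by (simp add: algebra_simps)
  then have "{- int r + int (a + k * L)..int r + int (a + k * L)} \<subseteq> {..int a + int K * int L - int L + int r}"
    by auto
  then show "(\<lambda>\<omega>. h ((\<theta> ^^ (a + k * L)) \<omega>)) \<in> borel_measurable (\<F> {..int a + int K * int L - int L + int r})"
    using measurable_comp_funpow_theta[OF h] by (rule measurable_\<F>_mono[rotated])
qed

lemma block_product_nn_integral_le: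
  fixes h :: "'a \<Rightarrow> ennreal"
  assumes mix: "psi_bounded (int s) C" and L: "s + 2 * r \<le> L"
    and h: "h \<in> borel_measurable (\<F> {-int r..int r})"
  shows "(\<integral>\<^sup>+\<omega>. (\<Prod>k<K. h ((\<theta> ^^ (a + k * L)) \<omega>)) \<partial>M) \<le> (C * integral\<^sup>N M h) ^ K"
proof (induction K)
  case 0
  then show ?case by (simp add: emeasure_space_1)
next
  case (Suc K)
  define n where "n = int a + int K * int L - int L + int r"
  let ?head = "\<lambda>\<omega>. \<Prod>k<K. h ((\<theta> ^^ (a + k * L)) \<omega>)"
  let ?last = "\<lambda>\<omega>. h ((\<theta> ^^ (a + K * L)) \<omega>)"
  have "A \<in> sets (\<F> {..n}) \<Longrightarrow> B \<in> sets (\<F> {n + int s..}) \<Longrightarrow>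
      emeasure M (A \<inter> B) \<le> C * emeasure M A * emeasure M B" for A B
    using mix by (auto simp: psi_bounded_def sets_\<F>)
  moreover have "?head \<in> borel_measurable (\<F> {..n})"
    unfolding n_def by (rule block_product_measurable[OF h])
  moreover have "?last \<in> borel_measurable (\<F> {n + int s..})"
    by (rule measurable_\<F>_mono[OF measurable_comp_funpow_theta[OF h]]) (use L in \<open>auto simp: n_def\<close>)
  ultimately have "(\<integral>\<^sup>+\<omega>. ?head \<omega> * ?last \<omega> \<partial>M) \<le> C * (\<integral>\<^sup>+\<omega>. ?head \<omega> \<partial>M) * (\<integral>\<^sup>+\<omega>. ?last \<omega> \<partial>M)"
    by (rule nn_integral_mult_le_mixing[OF subalgebra_\<F> subalgebra_\<F>])
  also have "(\<integral>\<^sup>+\<omega>. ?last \<omega> \<partial>M) = integral\<^sup>N M h"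
    using h by (intro nn_integral_funpow_theta measurable_\<F>_imp_measurable)
  also have "C * (\<integral>\<^sup>+\<omega>. ?head \<omega> \<partial>M) * integral\<^sup>N M h \<le> C * (C * integral\<^sup>N M h) ^ K * integral\<^sup>N M h"
    using Suc.IH by (intro mult_right_mono mult_left_mono) auto
  finally show ?case by (simp add: mult_ac)
qed

end

locale random_contraction = shift_process M N X \<theta>
  for M :: "'a measure" and N :: "'b measure" and X :: "int \<Rightarrow> 'a \<Rightarrow> 'b" and \<theta> :: "'a \<Rightarrow> 'a" +
  fixes \<rho> :: "'a \<Rightarrow> real"
  assumes rho_measurable: "\<rho> \<in> borel_measurable M"
    and rho_range: "\<And>\<omega>. \<omega> \<in> space M \<Longrightarrow> 0 < \<rho> \<omega> \<and> \<rho> \<omega> < 1"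
begin

lemma rho_funpow_theta_range: "\<omega> \<in> space M \<Longrightarrow> 0 < \<rho> ((\<theta> ^^ i) \<omega>) \<and> \<rho> ((\<theta> ^^ i) \<omega>) < 1"
  using rho_range[OF funpow_theta_space] .

lemma prod_rho_measurable: "(\<lambda>\<omega>. \<Prod>i\<in>I. \<rho> ((\<theta> ^^ i) \<omega>)) \<in> borel_measurable M"
  using measurable_compose[OF funpow_theta_measurable rho_measurable]
  by (intro borel_measurable_prod) (simp add: comp_def)

lemma prod_rho_nonneg: "\<omega> \<in> space M \<Longrightarrow> 0 \<le> (\<Prod>i\<in>I. \<rho> ((\<theta> ^^ i) \<omega>))"
  using rho_funpow_theta_range by (intro prod_nonneg) (simp add: less_imp_le)

lemma prod_rho_le_one: "\<omega> \<in> space M \<Longrightarrow> (\<Prod>i\<in>I. \<rho> ((\<theta> ^^ i) \<omega>)) \<le> 1"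
  using rho_funpow_theta_range by (intro prod_le_1) (simp add: less_imp_le)

lemma Rn_measurable: "Rn \<theta> \<rho> n \<in> borel_measurable M"
  unfolding Rn_def[abs_def] by (intro borel_measurable_sum prod_rho_measurable)

lemma Rn_nonneg: "\<omega> \<in> space M \<Longrightarrow> 0 \<le> Rn \<theta> \<rho> n \<omega>"
  unfolding Rn_def by (intro sum_nonneg prod_rho_nonneg)

lemma Rmn_measurable: "Rmn \<theta> \<rho> m n \<in> borel_measurable M"
  unfolding Rmn_def[abs_def] by (intro borel_measurable_sum prod_rho_measurable)

lemma Rmn_nonneg: "\<omega> \<in> space M \<Longrightarrow> 0 \<le> Rmn \<theta> \<rho> m n \<omega>"
  unfolding Rmn_def by (intro sum_nonneg prod_rho_nonneg)

lemma Rmn_le_sum_Rn: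
  assumes \<omega>: "\<omega> \<in> space M"
  shows "Rmn \<theta> \<rho> m n \<omega> \<le> (\<Sum>j\<in>{m..n}. Rn \<theta> \<rho> (Suc j) \<omega>)"
proof -
  define P where "P k j = (\<Prod>i\<in>{k..j}. \<rho> ((\<theta> ^^ i) \<omega>))" for k j
  have "Rmn \<theta> \<rho> m n \<omega> = (\<Sum>k\<in>{m..n}. \<Sum>j\<in>{j. j \<in> {m..n} \<and> k \<le> j}. P k j)"
    unfolding Rmn_def P_def by (intro sum.cong refl) auto
  also have "\<dots> = (\<Sum>j\<in>{m..n}. \<Sum>k\<in>{k. k \<in> {m..n} \<and> k \<le> j}. P k j)"
    by (rule sum.swap_restrict) auto
  also have "\<dots> \<le> (\<Sum>j\<in>{m..n}. \<Sum>k<Suc j. P k j)"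
    using prod_rho_nonneg[OF \<omega>] by (intro sum_mono sum_mono2) (auto simp: P_def)
  also have "\<dots> = (\<Sum>j\<in>{m..n}. Rn \<theta> \<rho> (Suc j) \<omega>)"
    unfolding Rn_def P_def by (intro sum.cong refl prod.cong) auto
  finally show ?thesis .
qed

lemma prod_rho_le_block_product:
  assumes \<omega>: "\<omega> \<in> space M" and le: "\<And>i. \<rho> ((\<theta> ^^ i) \<omega>) \<le> g ((\<theta> ^^ i) \<omega>)" and L: "0 < L"
  shows "(\<Prod>i\<in>{a..<a+d}. \<rho> ((\<theta> ^^ i) \<omega>)) \<le> (\<Prod>k<d div L. g ((\<theta> ^^ (a + k * L)) \<omega>))"
proof -
  let ?I = "(\<lambda>k. a + k * L) ` {..<d div L}"
  have "?I \<subseteq> {a..<a+d}"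
  proof clarify
    fix k assume "k < d div L"
    then have "Suc k * L \<le> d div L * L" by (intro mult_le_mono1) simp
    also have "\<dots> \<le> d" by (rule div_times_less_eq_dividend)
    finally show "a + k * L \<in> {a..<a+d}" using L by simp
  qed
  then have "(\<Prod>i\<in>{a..<a+d}. \<rho> ((\<theta> ^^ i) \<omega>)) = (\<Prod>i\<in>?I. \<rho> ((\<theta> ^^ i) \<omega>)) * (\<Prod>i\<in>{a..<a+d} - ?I. \<rho> ((\<theta> ^^ i) \<omega>))"
    by (subst prod.subset_diff[of ?I]) auto
  also have "\<dots> \<le> (\<Prod>i\<in>?I. \<rho> ((\<theta> ^^ i) \<omega>))"
    using prod_rho_nonneg[OF \<omega>] prod_rho_le_one[OF \<omega>] by (simp add: mult_left_le)
  also have "\<dots> = (\<Prod>k<d div L. \<rho> ((\<theta> ^^ (a + k * L)) \<omega>))"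
    using L by (subst prod.reindex) (auto simp: inj_on_def)
  also have "\<dots> \<le> (\<Prod>k<d div L. g ((\<theta> ^^ (a + k * L)) \<omega>))"
    using rho_funpow_theta_range[OF \<omega>] le by (intro prod_mono) (simp add: less_imp_le)
  finally show ?thesis .
qed

lemma interval_product_nn_integral_le:
  assumes mix: "psi_bounded (int s) C" and L: "s + 2 * r \<le> L" "0 < L"
    and \<rho>r: "\<rho>r \<in> borel_measurable (\<F> {-int r..int r})"
    and approx: "AE \<omega> in M. \<forall>i. \<rho> ((\<theta> ^^ i) \<omega>) \<le> \<rho>r ((\<theta> ^^ i) \<omega>) + b"
  shows "(\<integral>\<^sup>+\<omega>. ennreal (\<Prod>i\<in>{a..<a+d}. \<rho> ((\<theta> ^^ i) \<omega>)) \<partial>M)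
    \<le> (C * (\<integral>\<^sup>+\<omega>. ennreal (\<rho>r \<omega> + b) \<partial>M)) ^ (d div L)"
proof -
  let ?h = "\<lambda>\<omega>. ennreal (\<rho>r \<omega> + b)"
  have "AE \<omega> in M. ennreal (\<Prod>i\<in>{a..<a+d}. \<rho> ((\<theta> ^^ i) \<omega>)) \<le> (\<Prod>k<d div L. ?h ((\<theta> ^^ (a + k * L)) \<omega>))"
    using AE_space approx
  proof eventually_elim
    case (elim \<omega>)
    then have pos: "0 \<le> \<rho>r ((\<theta> ^^ i) \<omega>) + b" for i
      using rho_funpow_theta_range[OF elim(1), of i] by (meson less_imp_le order_trans)
    have "(\<Prod>i\<in>{a..<a+d}. \<rho> ((\<theta> ^^ i) \<omega>)) \<le> (\<Prod>k<d div L. \<rho>r ((\<theta> ^^ (a + k * L)) \<omega>) + b)"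
      using prod_rho_le_block_product[OF elim(1) _ L(2), of "\<lambda>\<omega>. \<rho>r \<omega> + b"] elim(2) by simp
    then show ?case
      using pos by (simp add: prod_ennreal prod_nonneg ennreal_leI)
  qed
  then have "(\<integral>\<^sup>+\<omega>. ennreal (\<Prod>i\<in>{a..<a+d}. \<rho> ((\<theta> ^^ i) \<omega>)) \<partial>M)
      \<le> (\<integral>\<^sup>+\<omega>. (\<Prod>k<d div L. ?h ((\<theta> ^^ (a + k * L)) \<omega>)) \<partial>M)"
    by (rule nn_integral_mono_AE)
  also have "\<dots> \<le> (C * integral\<^sup>N M ?h) ^ (d div L)"
    using \<rho>r by (intro block_product_nn_integral_le[OF mix L(1)] measurable_compose[OF _ measurable_ennreal]
        borel_measurable_add measurable_const) auto
  finally show ?thesis .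
qed

lemma rho_integrable: "integrable M \<rho>"
  using rho_range rho_measurable
  by (intro integrable_const_bound[where B = 1] AE_I2) (auto simp: less_imp_le)

lemma psi_mixing_constant:
  assumes "psiU M N X s < ereal (1 / (\<integral>\<omega>. \<rho> \<omega> \<partial>M) - 1)"
  obtains c where "0 \<le> c" "0 < (\<integral>\<omega>. \<rho> \<omega> \<partial>M)" "(1 + c) * (\<integral>\<omega>. \<rho> \<omega> \<partial>M) < 1"
    "psi_bounded s (ennreal (1 + c))"
proof -
  define E where "E = (\<integral>\<omega>. \<rho> \<omega> \<partial>M)"
  obtain c where c: "0 \<le> c" "c < 1 / E - 1" "psi_bounded s (ennreal (1 + c))"
    using psi_bounded_of_psiU_less assms unfolding E_def by blast
  have "0 < E"
  proof (rule ccontr)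
    assume "\<not> 0 < E"
    then have "1 / E \<le> 0" by (simp add: divide_nonpos_nonneg not_less)
    then show False using c by linarith
  qed
  moreover have "(1 + c) * E < 1"
    using c \<open>0 < E\<close> by (simp add: field_simps)
  ultimately show ?thesis using c that unfolding E_def by blast
qed

lemma rho_local_approximation:
  fixes \<beta> :: "nat \<Rightarrow> real"
  assumes approx: "\<And>r. r \<ge> 1 \<Longrightarrow> \<exists>\<rho>r. \<rho>r \<in> borel_measurable (\<F> {-int r..int r}) \<and>
      (AE \<omega> in M. \<bar>\<rho> \<omega> - \<rho>r \<omega>\<bar> \<le> \<beta> r)"
    and \<beta>: "\<beta> \<longlonglongrightarrow> 0" and \<delta>: "0 < \<delta>"
  obtains r b \<rho>r where "0 \<le> b" "b < \<delta>" "\<rho>r \<in> borel_measurable (\<F> {-int r..int r})"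
    "AE \<omega> in M. \<forall>i. \<rho> ((\<theta> ^^ i) \<omega>) \<le> \<rho>r ((\<theta> ^^ i) \<omega>) + b"
    "(\<integral>\<^sup>+\<omega>. ennreal (\<rho>r \<omega> + b) \<partial>M) \<le> ennreal ((\<integral>\<omega>. \<rho> \<omega> \<partial>M) + 2 * b)"
proof -
  obtain n0 where n0: "\<And>n. n \<ge> n0 \<Longrightarrow> \<bar>\<beta> n\<bar> < \<delta>"
    using LIMSEQ_D[OF \<beta> \<delta>] by auto
  define r where "r = max 1 n0"
  obtain \<rho>r where \<rho>r: "\<rho>r \<in> borel_measurable (\<F> {-int r..int r})"
    and close: "AE \<omega> in M. \<bar>\<rho> \<omega> - \<rho>r \<omega>\<bar> \<le> \<beta> r"
    using approx[of r] by (auto simp: r_def)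
  define b where "b = \<bar>\<beta> r\<bar>"
  have b: "0 \<le> b" "b < \<delta>" using n0[of r] by (auto simp: b_def r_def)
  have \<rho>rM: "\<rho>r \<in> borel_measurable M"
    using \<rho>r by (rule measurable_\<F>_imp_measurable)
  have "AE \<omega> in M. \<rho> \<omega> \<le> \<rho>r \<omega> + b"
    using close by eventually_elim (auto simp: b_def)
  moreover have "{\<omega> \<in> space M. \<rho> \<omega> \<le> \<rho>r \<omega> + b} \<in> sets M"
    using \<rho>rM rho_measurable by measurable
  ultimately have "AE \<omega> in M. \<rho> ((\<theta> ^^ i) \<omega>) \<le> \<rho>r ((\<theta> ^^ i) \<omega>) + b" for i
    by (rule AE_funpow_theta)
  then have shifted: "AE \<omega> in M. \<forall>i. \<rho> ((\<theta> ^^ i) \<omega>) \<le> \<rho>r ((\<theta> ^^ i) \<omega>) + b"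
    by (simp add: AE_all_countable)
  have "(\<integral>\<^sup>+\<omega>. ennreal (\<rho>r \<omega> + b) \<partial>M) \<le> (\<integral>\<^sup>+\<omega>. ennreal (\<rho> \<omega> + 2 * b) \<partial>M)"
    using close by (intro nn_integral_mono_AE) (auto elim!: eventually_mono intro!: ennreal_leI simp: b_def)
  also have "\<dots> = ennreal (\<integral>\<omega>. \<rho> \<omega> + 2 * b \<partial>M)"
    using rho_integrable rho_range b
    by (intro nn_integral_eq_integral AE_I2) (auto simp: less_imp_le)
  also have "(\<integral>\<omega>. \<rho> \<omega> + 2 * b \<partial>M) = (\<integral>\<omega>. \<rho> \<omega> \<partial>M) + 2 * b"
    using rho_integrable by (simp add: prob_space)
  finally show ?thesis using that b \<rho>r shifted by blast
qed

lemma prod_rho_block_decay: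
  fixes \<beta> :: "nat \<Rightarrow> real"
  assumes approx: "\<And>r. r \<ge> 1 \<Longrightarrow> \<exists>\<rho>r. \<rho>r \<in> borel_measurable (\<F> {-int r..int r}) \<and>
      (AE \<omega> in M. \<bar>\<rho> \<omega> - \<rho>r \<omega>\<bar> \<le> \<beta> r)"
    and \<beta>: "\<beta> \<longlonglongrightarrow> 0"
    and psi: "\<exists>s\<ge>1. psiU M N X s < ereal (1 / (\<integral>\<omega>. \<rho> \<omega> \<partial>M) - 1)"
  obtains lam L where "0 < lam" "lam < 1" "0 < L"
    "\<And>a d. (\<integral>\<^sup>+\<omega>. ennreal (\<Prod>i\<in>{a..<a+d}. \<rho> ((\<theta> ^^ i) \<omega>)) \<partial>M) \<le> ennreal (lam ^ (d div L))"
proof -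
  define E where "E = (\<integral>\<omega>. \<rho> \<omega> \<partial>M)"
  obtain s where s: "s \<ge> 1" "psiU M N X s < ereal (1 / E - 1)"
    using psi unfolding E_def by blast
  obtain c where c: "0 \<le> c" "0 < E" "(1 + c) * E < 1" and mix: "psi_bounded s (ennreal (1 + c))"
    using psi_mixing_constant[OF s(2)[unfolded E_def]] unfolding E_def by blast
  define \<delta> where "\<delta> = (1 / (1 + c) - E) / 2"
  have "0 < \<delta>" using c by (simp add: \<delta>_def field_simps)
  then obtain r b \<rho>r where b: "0 \<le> b" "b < \<delta>" and \<rho>r: "\<rho>r \<in> borel_measurable (\<F> {-int r..int r})"
    and shifted: "AE \<omega> in M. \<forall>i. \<rho> ((\<theta> ^^ i) \<omega>) \<le> \<rho>r ((\<theta> ^^ i) \<omega>) + b"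
    and int_le: "(\<integral>\<^sup>+\<omega>. ennreal (\<rho>r \<omega> + b) \<partial>M) \<le> ennreal (E + 2 * b)"
    using rho_local_approximation[OF approx \<beta>] unfolding E_def by blast
  define lam where "lam = (1 + c) * (E + 2 * b)"
  have lam: "0 < lam" "lam < 1"
  proof -
    show "0 < lam" using c b by (simp add: lam_def)
    have "lam < (1 + c) * (E + 2 * \<delta>)"
      using c b unfolding lam_def by (intro mult_strict_left_mono) auto
    also have "\<dots> = 1" using c by (simp add: \<delta>_def field_simps)
    finally show "lam < 1" .
  qed
  define L where "L = nat s + 2 * r"
  have L: "nat s + 2 * r \<le> L" "0 < L" using s by (auto simp: L_def)
  have mix': "psi_bounded (int (nat s)) (ennreal (1 + c))" using mix s by simp
  have "(\<integral>\<^sup>+\<omega>. ennreal (\<Prod>i\<in>{a..<a+d}. \<rho> ((\<theta> ^^ i) \<omega>)) \<partial>M) \<le> ennreal (lam ^ (d div L))" for a d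
  proof -
    have "(\<integral>\<^sup>+\<omega>. ennreal (\<Prod>i\<in>{a..<a+d}. \<rho> ((\<theta> ^^ i) \<omega>)) \<partial>M)
        \<le> (ennreal (1 + c) * (\<integral>\<^sup>+\<omega>. ennreal (\<rho>r \<omega> + b) \<partial>M)) ^ (d div L)"
      by (rule interval_product_nn_integral_le[OF mix' L \<rho>r shifted])
    also have "\<dots> \<le> (ennreal (1 + c) * ennreal (E + 2 * b)) ^ (d div L)"
      using int_le by (intro power_mono mult_left_mono) auto
    also have "\<dots> = ennreal lam ^ (d div L)"
      unfolding lam_def by (subst ennreal_mult) (use c b in auto)
    finally show ?thesis
      using lam by (simp add: ennreal_power)
  qed
  then show ?thesis using that lam L by blast
qed

lemma prod_rho_exponential_decay:
  fixes \<beta> :: "nat \<Rightarrow> real"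
  assumes approx: "\<And>r. r \<ge> 1 \<Longrightarrow> \<exists>\<rho>r. \<rho>r \<in> borel_measurable (\<F> {-int r..int r}) \<and>
      (AE \<omega> in M. \<bar>\<rho> \<omega> - \<rho>r \<omega>\<bar> \<le> \<beta> r)"
    and \<beta>: "\<beta> \<longlonglongrightarrow> 0"
    and psi: "\<exists>s\<ge>1. psiU M N X s < ereal (1 / (\<integral>\<omega>. \<rho> \<omega> \<partial>M) - 1)"
  obtains A k where "0 \<le> A" "0 < k" "k < 1"
    "\<And>a d. (\<integral>\<^sup>+\<omega>. ennreal (\<Prod>i\<in>{a..<a+d}. \<rho> ((\<theta> ^^ i) \<omega>)) \<partial>M) \<le> ennreal (A * k ^ d)"
proof -
  obtain lam L where lam: "0 < lam" "lam < 1" and L: "0 < L"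
    and decay: "\<And>a d. (\<integral>\<^sup>+\<omega>. ennreal (\<Prod>i\<in>{a..<a+d}. \<rho> ((\<theta> ^^ i) \<omega>)) \<partial>M) \<le> ennreal (lam ^ (d div L))"
    using prod_rho_block_decay[OF approx \<beta> psi] by blast
  have "(\<integral>\<^sup>+\<omega>. ennreal (\<Prod>i\<in>{a..<a+d}. \<rho> ((\<theta> ^^ i) \<omega>)) \<partial>M) \<le> ennreal (1 / lam * root L lam ^ d)" for a d
    using decay[of a d] power_div_le_root_power[OF lam, of L d] L
    by (auto intro: order_trans ennreal_leI)
  moreover have "0 \<le> 1 / lam" "0 < root L lam" "root L lam < 1" using lam L by auto
  ultimately show ?thesis using that by blast
qed

lemma nn_integral_Rn_power_le:
  assumes decay: "\<And>a d. (\<integral>\<^sup>+\<omega>. ennreal (\<Prod>i\<in>{a..<a+d}. \<rho> ((\<theta> ^^ i) \<omega>)) \<partial>M) \<le> ennreal (A * k ^ d)"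
    and A: "0 \<le> A" and k: "0 \<le> k" and \<tau>: "0 < \<tau>" "\<tau> < 1" and p: "p \<ge> 1"
  shows "(\<integral>\<^sup>+\<omega>. ennreal (Rn \<theta> \<rho> n \<omega> ^ p) \<partial>M)
    \<le> ennreal ((1 / (1 - \<tau>)) ^ (p - 1) * (A * (\<Sum>j<n. (k / \<tau> ^ (p - 1)) ^ (n - j))))"
proof -
  define T where "T = (1 / (1 - \<tau>)) ^ (p - 1)"
  define x where "x j \<omega> = (\<Prod>i\<in>{j..<n}. \<rho> ((\<theta> ^^ i) \<omega>))" for j \<omega>
  define w where "w j = 1 / (\<tau> ^ (p - 1)) ^ (n - j)" for j
  have T: "0 \<le> T" using \<tau> by (simp add: T_def)
  have x: "\<omega> \<in> space M \<Longrightarrow> 0 \<le> x j \<omega> \<and> x j \<omega> \<le> 1" for j \<omega>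
    unfolding x_def using prod_rho_nonneg prod_rho_le_one by blast
  have w: "0 \<le> w j" for j using \<tau> by (simp add: w_def)
  have "(\<integral>\<^sup>+\<omega>. ennreal (Rn \<theta> \<rho> n \<omega> ^ p) \<partial>M) \<le> (\<integral>\<^sup>+\<omega>. ennreal (T * (\<Sum>j<n. w j * x j \<omega>)) \<partial>M)"
    using power_sum_le_geometric_weights[OF x \<tau> p]
    by (intro nn_integral_mono ennreal_leI) (simp add: Rn_def x_def w_def T_def)
  also have "\<dots> = (\<integral>\<^sup>+\<omega>. ennreal T * (\<Sum>j<n. ennreal (w j) * ennreal (x j \<omega>)) \<partial>M)"
    using T w x by (intro nn_integral_cong) (simp add: ennreal_mult' sum_nonneg sum_ennreal[symmetric] del: sum_ennreal)
  also have "\<dots> = ennreal T * (\<Sum>j<n. ennreal (w j) * (\<integral>\<^sup>+\<omega>. ennreal (x j \<omega>) \<partial>M))"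
    using prod_rho_measurable unfolding x_def by (simp add: nn_integral_cmult nn_integral_sum)
  also have "\<dots> \<le> ennreal T * (\<Sum>j<n. ennreal (w j) * ennreal (A * k ^ (n - j)))"
  proof (intro mult_left_mono sum_mono)
    fix j assume "j \<in> {..<n}"
    then show "(\<integral>\<^sup>+\<omega>. ennreal (x j \<omega>) \<partial>M) \<le> ennreal (A * k ^ (n - j))"
      using decay[of j "n - j"] by (simp add: x_def)
  qed auto
  also have "\<dots> = ennreal (T * (\<Sum>j<n. w j * (A * k ^ (n - j))))"
    using T w A k by (simp add: ennreal_mult' sum_nonneg sum_ennreal[symmetric] del: sum_ennreal)
  also have "(\<Sum>j<n. w j * (A * k ^ (n - j))) = A * (\<Sum>j<n. (k / \<tau> ^ (p - 1)) ^ (n - j))"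
    by (simp add: sum_distrib_left w_def power_divide)
  finally show ?thesis by (simp add: T_def)
qed

lemma Rn_moments_bounded:
  assumes decay: "\<And>a d. (\<integral>\<^sup>+\<omega>. ennreal (\<Prod>i\<in>{a..<a+d}. \<rho> ((\<theta> ^^ i) \<omega>)) \<partial>M) \<le> ennreal (A * k ^ d)"
    and A: "0 \<le> A" and k: "0 < k" "k < 1" and p: "p \<ge> 1"
  shows "\<exists>C\<ge>0. \<forall>n. (\<integral>\<^sup>+\<omega>. ennreal (Rn \<theta> \<rho> n \<omega> ^ p) \<partial>M) \<le> ennreal C"
proof -
  \<comment> \<open>Any \<open>\<tau> < 1\<close> with \<open>k < \<tau>\<^sup>p\<close> makes the weighted sum geometric with ratio \<open>\<mu> < 1\<close>.\<close>
  define \<tau> where "\<tau> = (root p k + 1) / 2"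
  have rk: "0 < root p k" "root p k < 1" using k p by auto
  then have \<tau>: "0 < \<tau>" "\<tau> < 1" "root p k < \<tau>" by (auto simp: \<tau>_def)
  have "k < \<tau> ^ p"
    using real_root_pow_pos2[of p k] power_strict_mono[OF \<tau>(3), of p] rk k p by simp
  also have "\<tau> ^ p \<le> \<tau> ^ (p - 1)" using \<tau> by (intro power_decreasing) auto
  finally have "k < \<tau> ^ (p - 1)" .
  define \<mu> where "\<mu> = k / \<tau> ^ (p - 1)"
  have \<mu>: "0 \<le> \<mu>" "\<mu> < 1" using k \<open>k < \<tau> ^ (p - 1)\<close> \<tau> by (auto simp: \<mu>_def)
  define C where "C = (1 / (1 - \<tau>)) ^ (p - 1) * (A * (1 / (1 - \<mu>)))"
  have "(\<integral>\<^sup>+\<omega>. ennreal (Rn \<theta> \<rho> n \<omega> ^ p) \<partial>M) \<le> ennreal C" for n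
  proof -
    have "(\<integral>\<^sup>+\<omega>. ennreal (Rn \<theta> \<rho> n \<omega> ^ p) \<partial>M)
        \<le> ennreal ((1 / (1 - \<tau>)) ^ (p - 1) * (A * (\<Sum>j<n. \<mu> ^ (n - j))))"
      unfolding \<mu>_def using k by (intro nn_integral_Rn_power_le[OF decay A _ \<tau>(1,2) p]) auto
    also have "\<dots> \<le> ennreal C"
      unfolding C_def using sum_power_reverse_le[OF \<mu>, of n] A \<tau>
      by (intro ennreal_leI mult_left_mono) auto
    finally show ?thesis .
  qed
  moreover have "0 \<le> C" using A \<tau> \<mu> by (simp add: C_def)
  ultimately show ?thesis by blast
qed

lemma Rmn_moment_le:
  assumes moment: "\<And>n. (\<integral>\<^sup>+\<omega>. ennreal (Rn \<theta> \<rho> n \<omega> ^ p) \<partial>M) \<le> ennreal C"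
    and p: "p \<ge> 1" and C: "0 \<le> C" and mn: "m \<le> n"
  shows "(\<integral>\<^sup>+\<omega>. ennreal (Rmn \<theta> \<rho> m n \<omega> ^ p) \<partial>M) \<le> ennreal (real (Suc (n - m)) ^ p * C)"
proof -
  define c where "c = real (Suc (n - m))"
  have pointwise: "Rmn \<theta> \<rho> m n \<omega> ^ p \<le> c ^ (p - 1) * (\<Sum>j\<in>{m..n}. Rn \<theta> \<rho> (Suc j) \<omega> ^ p)"
    if \<omega>: "\<omega> \<in> space M" for \<omega>
  proof -
    have "Rmn \<theta> \<rho> m n \<omega> ^ p \<le> (\<Sum>j\<in>{m..n}. Rn \<theta> \<rho> (Suc j) \<omega>) ^ p"
      using Rmn_le_sum_Rn[OF \<omega>] Rmn_nonneg[OF \<omega>] by (intro power_mono)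
    also have "\<dots> \<le> (\<Sum>j\<in>{m..n}. 1) ^ (p - 1) * (\<Sum>j\<in>{m..n}. Rn \<theta> \<rho> (Suc j) \<omega> ^ p / 1 ^ (p - 1))"
      using mn Rn_nonneg[OF \<omega>] p by (intro power_sum_le_weighted) auto
    finally show ?thesis using mn by (simp add: c_def Suc_diff_le)
  qed
  have "ennreal (Rmn \<theta> \<rho> m n \<omega> ^ p) \<le> ennreal (c ^ (p - 1)) * (\<Sum>j\<in>{m..n}. ennreal (Rn \<theta> \<rho> (Suc j) \<omega> ^ p))"
    if \<omega>: "\<omega> \<in> space M" for \<omega>
  proof -
    have "ennreal (Rmn \<theta> \<rho> m n \<omega> ^ p) \<le> ennreal (c ^ (p - 1) * (\<Sum>j\<in>{m..n}. Rn \<theta> \<rho> (Suc j) \<omega> ^ p))"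
      by (rule ennreal_leI[OF pointwise[OF \<omega>]])
    also have "\<dots> = ennreal (c ^ (p - 1)) * (\<Sum>j\<in>{m..n}. ennreal (Rn \<theta> \<rho> (Suc j) \<omega> ^ p))"
      using Rn_nonneg[OF \<omega>] by (simp add: c_def ennreal_mult' sum_nonneg)
    finally show ?thesis .
  qed
  then have "(\<integral>\<^sup>+\<omega>. ennreal (Rmn \<theta> \<rho> m n \<omega> ^ p) \<partial>M)
      \<le> (\<integral>\<^sup>+\<omega>. ennreal (c ^ (p - 1)) * (\<Sum>j\<in>{m..n}. ennreal (Rn \<theta> \<rho> (Suc j) \<omega> ^ p)) \<partial>M)"
    by (rule nn_integral_mono)
  also have "\<dots> = ennreal (c ^ (p - 1)) * (\<Sum>j\<in>{m..n}. \<integral>\<^sup>+\<omega>. ennreal (Rn \<theta> \<rho> (Suc j) \<omega> ^ p) \<partial>M)"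
    using Rn_measurable by (simp add: nn_integral_cmult nn_integral_sum)
  also have "\<dots> \<le> ennreal (c ^ (p - 1)) * (\<Sum>j\<in>{m..n}. ennreal C)"
    by (intro mult_left_mono sum_mono moment) simp
  also have "\<dots> = ennreal (c ^ (p - 1) * (c * C))"
    using C mn by (simp add: c_def Suc_diff_le ennreal_mult' ennreal_of_nat_eq_real_of_nat)
  also have "c ^ (p - 1) * (c * C) = c ^ p * C"
    using p by (cases p) simp_all
  finally show ?thesis by (simp add: c_def)
qed

end

theorem mainTheorem15:
  fixes M :: "'a measure" and N :: "'b measure"
    and X :: "int \<Rightarrow> 'a \<Rightarrow> 'b" and \<theta> :: "'a \<Rightarrow> 'a"
    and \<rho> :: "'a \<Rightarrow> real" and \<beta> :: "nat \<Rightarrow> real"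
  assumes P: "prob_space M"
    and theta_meas: "\<theta> \<in> measurable M M"
    and theta_bij: "bij_betw \<theta> (space M) (space M)"
    and theta_inv_meas: "the_inv_into (space M) \<theta> \<in> measurable M M"
    and theta_pres: "distr M M \<theta> = M"
    and X_meas: "\<And>j. X j \<in> measurable M N"
    and X_shift: "\<And>j \<omega>. \<omega> \<in> space M \<Longrightarrow> X j (\<theta> \<omega>) = X (j + 1) \<omega>"
    and gen: "sets M = gen_sets M N X UNIV"
    and rho_meas: "\<rho> \<in> borel_measurable M"
    and rho_range: "\<And>\<omega>. \<omega> \<in> space M \<Longrightarrow> 0 < \<rho> \<omega> \<and> \<rho> \<omega> < 1"
    and rho_approx: "\<And>r. r \<ge> 1 \<Longrightarrow> \<exists>\<rho>r.
           \<rho>r \<in> borel_measurable (sigma (space M) (gen_sets M N X {-int r..int r})) \<and>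
           (AE \<omega> in M. \<bar>\<rho> \<omega> - \<rho>r \<omega>\<bar> \<le> \<beta> r)"
    and beta_lim: "\<beta> \<longlonglongrightarrow> 0"
    and psi: "\<exists>s\<ge>1. psiU M N X s < ereal (1 / (\<integral>\<omega>. \<rho> \<omega> \<partial>M) - 1)"
  shows "(\<forall>p::nat. p \<ge> 1 \<longrightarrow> (\<exists>C::real. \<forall>n. (\<integral>\<omega>. (Rn \<theta> \<rho> n \<omega>) ^ p \<partial>M) \<le> C))
       \<and> (\<forall>\<epsilon>::real. \<epsilon> > 0 \<longrightarrow>
            (AE \<omega> in M. (\<lambda>n. Rn \<theta> \<rho> n \<omega>) \<in> o(\<lambda>n. real n powr \<epsilon>)))
       \<and> (\<forall>\<epsilon>::real. \<forall>p::nat. \<epsilon> > 0 \<longrightarrow> p \<ge> 1 \<longrightarrow> (\<exists>C::real. \<forall>l::nat. l \<ge> 1 \<longrightarrow>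
            (\<integral>\<^sup>+ \<omega>. (SUP nm\<in>{(n, m). 1 \<le> n \<and> m \<le> n \<and> n - m \<le> l}.
                ennreal (real (fst nm) powr (-(1 + \<epsilon>)) * (Rmn \<theta> \<rho> (snd nm) (fst nm) \<omega>) ^ p)) \<partial>M)
              \<le> ennreal (C * real l ^ (1 + p))))"
proof -
  interpret random_contraction M N X \<theta> \<rho>
    using P theta_meas theta_pres X_meas X_shift rho_meas rho_range
    by (simp add: random_contraction_def random_contraction_axioms_def shift_process_def shift_process_axioms_def)
  obtain A k where "0 \<le> A" "0 < k" "k < 1"
    "\<And>a d. (\<integral>\<^sup>+\<omega>. ennreal (\<Prod>i\<in>{a..<a+d}. \<rho> ((\<theta> ^^ i) \<omega>)) \<partial>M) \<le> ennreal (A * k ^ d)"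
    using prod_rho_exponential_decay[OF rho_approx beta_lim psi] by blast
  then have moments: "\<exists>C\<ge>0. \<forall>n. (\<integral>\<^sup>+\<omega>. ennreal (Rn \<theta> \<rho> n \<omega> ^ p) \<partial>M) \<le> ennreal C" if "p \<ge> 1" for p
    using Rn_moments_bounded that by blast
  show ?thesis
  proof (intro conjI allI impI)
    fix p :: nat assume "p \<ge> 1"
    then obtain C where C: "0 \<le> C" "\<And>n. (\<integral>\<^sup>+\<omega>. ennreal (Rn \<theta> \<rho> n \<omega> ^ p) \<partial>M) \<le> ennreal C"
      using moments by blast
    then show "\<exists>C. \<forall>n. (\<integral>\<omega>. Rn \<theta> \<rho> n \<omega> ^ p \<partial>M) \<le> C"
      using integral_real_bounded[OF C] by blast
  next
    fix \<epsilon> :: real assume "\<epsilon> > 0"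
    then show "AE \<omega> in M. (\<lambda>n. Rn \<theta> \<rho> n \<omega>) \<in> o(\<lambda>n. real n powr \<epsilon>)"
      using AE_o_powr_of_bounded_moments[OF Rn_measurable Rn_nonneg moments] by blast
  next
    fix \<epsilon> :: real and p :: nat assume "\<epsilon> > 0" "p \<ge> 1"
    then obtain C where "0 \<le> C" "\<And>n. (\<integral>\<^sup>+\<omega>. ennreal (Rn \<theta> \<rho> n \<omega> ^ p) \<partial>M) \<le> ennreal C"
      using moments by blast
    with \<open>\<epsilon> > 0\<close> \<open>p \<ge> 1\<close> show "\<exists>C. \<forall>l\<ge>1. (\<integral>\<^sup>+\<omega>. (SUP nm\<in>{(n, m). 1 \<le> n \<and> m \<le> n \<and> n - m \<le> l}.
        ennreal (real (fst nm) powr (-(1 + \<epsilon>)) * Rmn \<theta> \<rho> (snd nm) (fst nm) \<omega> ^ p)) \<partial>M)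
        \<le> ennreal (C * real l ^ (1 + p))"
      by (intro nn_integral_SUP_window_le Rmn_measurable Rmn_moment_le)
  qed
qed

end
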